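(* Let $0\to E_1\to E_2\to E_3\to0$ be an exact sequence of $\mathfrak b_I$-modules (each a direct sum of $\mathfrak t$-weight spaces), and suppose that no weight of $E_1$ is contained in $\Delta_I^+\cup\{0\}$. Then the induced map $E_2^{\mathfrak b_I}\to E_3^{\mathfrak b_I}$ on $\mathfrak b_I$-invariants is an isomorphism.
   Context: $G$ is a connected semisimple algebraic group over $\mathbb C$, $B$ a Borel subgroup, $T\subset B$ a maximal torus with Lie algebra $\mathfrak t$, $\Delta^+$ the positive roots with respect to $B$. $I$ is a set of simple roots, $\Delta_I^+$ the positive roots lying in $\operatorname{Span}_{\mathbb Z}I$, $G_I$ the Levi subgroup containing $T$ of the parabolic subgroup $P_I\supseteq B$ associated to $I$, $B_I=G_I\cap B$, and $\mathfrak b_I=\operatorname{Lie}(B_I)=\mathfrak t\oplus\bigoplus_{\alpha\in\Delta_I^+}\mathfrak g^\alpha$. *)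

theory Defs
  imports Complex_Main
begin

definition lie_algebra :: "(complex \<Rightarrow> 'b::ab_group_add \<Rightarrow> 'b) \<Rightarrow> ('b \<Rightarrow> 'b \<Rightarrow> 'b) \<Rightarrow> bool" where
  "lie_algebra sc br \<longleftrightarrow>
     vector_space sc \<and>
     (\<forall>x. Vector_Spaces.linear sc sc (br x)) \<and>
     (\<forall>y. Vector_Spaces.linear sc sc (\<lambda>x. br x y)) \<and>
     (\<forall>x. br x x = 0) \<and>
     (\<forall>x y z. br x (br y z) + br y (br z x) + br z (br x y) = 0)"

definition lie_module ::
  "(complex \<Rightarrow> 'b::ab_group_add \<Rightarrow> 'b) \<Rightarrow> ('b \<Rightarrow> 'b \<Rightarrow> 'b) \<Rightarrow>
   (complex \<Rightarrow> 'e::ab_group_add \<Rightarrow> 'e) \<Rightarrow> ('b \<Rightarrow> 'e \<Rightarrow> 'e) \<Rightarrow> bool" where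
  "lie_module sc br se rho \<longleftrightarrow>
     vector_space se \<and>
     (\<forall>x. Vector_Spaces.linear se se (rho x)) \<and>
     (\<forall>x y v. rho (x + y) v = rho x v + rho y v) \<and>
     (\<forall>c x v. rho (sc c x) v = se c (rho x v)) \<and>
     (\<forall>x y v. rho (br x y) v = rho x (rho y v) - rho y (rho x v))"

definition lie_module_hom ::
  "(complex \<Rightarrow> 'e1::ab_group_add \<Rightarrow> 'e1) \<Rightarrow> ('b \<Rightarrow> 'e1 \<Rightarrow> 'e1) \<Rightarrow>
   (complex \<Rightarrow> 'e2::ab_group_add \<Rightarrow> 'e2) \<Rightarrow> ('b \<Rightarrow> 'e2 \<Rightarrow> 'e2) \<Rightarrow> ('e1 \<Rightarrow> 'e2) \<Rightarrow> bool" where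
  "lie_module_hom se1 rho1 se2 rho2 f \<longleftrightarrow>
     Vector_Spaces.linear se1 se2 f \<and> (\<forall>x v. f (rho1 x v) = rho2 x (f v))"

text \<open>Weight space E_lambda for the action of the subspace t (lambda is only
  evaluated on t).\<close>
definition weight_space ::
  "(complex \<Rightarrow> 'e::ab_group_add \<Rightarrow> 'e) \<Rightarrow> ('b \<Rightarrow> 'e \<Rightarrow> 'e) \<Rightarrow> 'b set \<Rightarrow> ('b \<Rightarrow> complex) \<Rightarrow> 'e set" where
  "weight_space se rho t lam = {v. \<forall>h\<in>t. rho h v = se (lam h) v}"

definition weight_module ::
  "(complex \<Rightarrow> 'e::ab_group_add \<Rightarrow> 'e) \<Rightarrow> ('b \<Rightarrow> 'e \<Rightarrow> 'e) \<Rightarrow> 'b set \<Rightarrow> bool" where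
  "weight_module se rho t \<longleftrightarrow> module.span se (\<Union>lam. weight_space se rho t lam) = UNIV"

definition is_weight ::
  "(complex \<Rightarrow> 'e::ab_group_add \<Rightarrow> 'e) \<Rightarrow> ('b \<Rightarrow> 'e \<Rightarrow> 'e) \<Rightarrow> 'b set \<Rightarrow> ('b \<Rightarrow> complex) \<Rightarrow> bool" where
  "is_weight se rho t lam \<longleftrightarrow> (\<exists>v\<in>weight_space se rho t lam. v \<noteq> 0)"

definition invariants :: "('b \<Rightarrow> 'e::ab_group_add \<Rightarrow> 'e) \<Rightarrow> 'e set" where
  "invariants rho = {v. \<forall>x. rho x v = 0}"

definition root_space ::
  "(complex \<Rightarrow> 'b::ab_group_add \<Rightarrow> 'b) \<Rightarrow> ('b \<Rightarrow> 'b \<Rightarrow> 'b) \<Rightarrow> 'b set \<Rightarrow> ('b \<Rightarrow> complex) \<Rightarrow> 'b set" where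
  "root_space sc br t alpha = {x. \<forall>h\<in>t. br h x = sc (alpha h) x}"

text \<open>Two functionals agree on t (equality of elements of t-dual).\<close>
definition eq_on :: "'b set \<Rightarrow> ('b \<Rightarrow> complex) \<Rightarrow> ('b \<Rightarrow> complex) \<Rightarrow> bool" where
  "eq_on t lam mu \<longleftrightarrow> (\<forall>h\<in>t. lam h = mu h)"

text \<open>The Lie algebra has the shape of b_I: b = t (+) sum of root spaces g^alpha,
  alpha in R (= Delta_I^+), with t an abelian subalgebra and the roots nonzero
  linear functionals on t.\<close>
definition borel_type ::
  "(complex \<Rightarrow> 'b::ab_group_add \<Rightarrow> 'b) \<Rightarrow> ('b \<Rightarrow> 'b \<Rightarrow> 'b) \<Rightarrow> 'b set \<Rightarrow> ('b \<Rightarrow> complex) set \<Rightarrow> bool" where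
  "borel_type sc br t R \<longleftrightarrow>
     module.subspace sc t \<and>
     (\<forall>h\<in>t. \<forall>h'\<in>t. br h h' = 0) \<and>
     finite R \<and>
     (\<forall>alpha\<in>R. \<forall>h\<in>t. \<forall>h'\<in>t. alpha (h + h') = alpha h + alpha h') \<and>
     (\<forall>alpha\<in>R. \<forall>c. \<forall>h\<in>t. alpha (sc c h) = c * alpha h) \<and>
     (\<forall>alpha\<in>R. \<exists>h\<in>t. alpha h \<noteq> 0) \<and>
     module.span sc (t \<union> (\<Union>alpha\<in>R. root_space sc br t alpha)) = UNIV"

end

theory Submission
  imports Defs
begin

text \<open>
  Since \<open>E\<^sub>1\<close> has no weight \<open>0\<close>, it has no nonzero invariants, and left exactness of invariants
  makes \<open>E\<^sub>2\<^sup>b \<rightarrow> E\<^sub>3\<^sup>b\<close> injective. For surjectivity lift an invariant \<open>w \<in> E\<^sub>3\<close> to \<open>E\<^sub>2\<close> and keep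
  only the weight-\<open>0\<close> component \<open>v\<close> of the lift, which still maps to \<open>w\<close> because \<open>g\<close> respects
  weight decompositions. Then \<open>t\<close> kills \<open>v\<close>, and for a root vector \<open>x\<close> of root \<open>\<alpha>\<close> the vector
  \<open>x v\<close> lies in \<open>ker g = f(E\<^sub>1)\<close> and has weight \<open>\<alpha>\<close>, so it vanishes. As \<open>t\<close> and the root spaces span
  \<open>b\<^sub>I\<close>, \<open>v\<close> is invariant.
\<close>

lemma lie_moduleD:
  assumes "lie_module sc br se rho"
  shows "vector_space se" and "Vector_Spaces.linear se se (rho x)"
    and "rho (x + y) v = rho x v + rho y v" and "rho (sc c x) v = se c (rho x v)"
    and "rho (br x y) v = rho x (rho y v) - rho y (rho x v)"
  using assms unfolding lie_module_def by auto

lemma lie_module_homD: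
  assumes "lie_module_hom se1 rho1 se2 rho2 f"
  shows "Vector_Spaces.linear se1 se2 f" and "f (rho1 x v) = rho2 x (f v)"
  using assms unfolding lie_module_hom_def by auto

lemma weight_space_subspace:
  assumes "lie_module sc br se rho"
  shows "module.subspace se (weight_space se rho t lam)"
proof -
  interpret vector_space se by (rule lie_moduleD(1)[OF assms])
  have "rho h (x + y) = rho h x + rho h y" "rho h (se c x) = se c (rho h x)" "rho h 0 = 0"
    for h x y c
  proof -
    interpret Vector_Spaces.linear se se "rho h" by (rule lie_moduleD(2)[OF assms])
    show "rho h (x + y) = rho h x + rho h y" "rho h (se c x) = se c (rho h x)" "rho h 0 = 0"
      by (simp_all add: add scale)
  qed
  then show ?thesis
    unfolding subspace_def weight_space_def
    by (auto simp: scale_right_distrib scale_left_commute)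
qed

lemma invariants_subset_zero_weight_space:
  assumes "vector_space se"
  shows "invariants rho \<subseteq> weight_space se rho t (\<lambda>_. 0)"
proof -
  interpret vector_space se by fact
  show ?thesis by (auto simp: invariants_def weight_space_def)
qed

lemma root_space_action_weight_space:
  assumes M: "lie_module sc br se rho"
    and x: "x \<in> root_space sc br t alpha" and v: "v \<in> weight_space se rho t lam"
  shows "rho x v \<in> weight_space se rho t (\<lambda>h. lam h + alpha h)"
  unfolding weight_space_def
proof (intro CollectI ballI)
  interpret vector_space se by (rule lie_moduleD(1)[OF M])
  interpret rho_x: Vector_Spaces.linear se se "rho x" by (rule lie_moduleD(2)[OF M])
  fix h assume h: "h \<in> t"
  have "rho h (rho x v) = rho (br h x) v + rho x (rho h v)"
    using lie_moduleD(5)[OF M, of h x v] by simp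
  also have "\<dots> = se (alpha h) (rho x v) + se (lam h) (rho x v)"
    using x v h rho_x.scale
    by (simp add: root_space_def weight_space_def lie_moduleD(4)[OF M])
  finally show "rho h (rho x v) = se (lam h + alpha h) (rho x v)"
    by (simp add: scale_left_distrib add.commute)
qed

lemma weight_space_preimage:
  assumes hf: "lie_module_hom se1 rho1 se2 rho2 f" and "inj f"
    and "f u \<in> weight_space se2 rho2 t lam"
  shows "u \<in> weight_space se1 rho1 t lam"
proof -
  interpret f: Vector_Spaces.linear se1 se2 f by (rule lie_module_homD(1)[OF hf])
  have "f (rho1 h u) = f (se1 (lam h) u)" if "h \<in> t" for h
    using assms(3) that by (simp add: weight_space_def lie_module_homD(2)[OF hf] f.scale)
  then show ?thesis
    using \<open>inj f\<close> by (auto simp: weight_space_def dest: injD)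
qed

lemma invariant_if_annihilated_by_spanning_set:
  assumes "vector_space sc" and M: "lie_module sc br se rho"
    and span: "module.span sc S = UNIV" and kill: "\<And>x. x \<in> S \<Longrightarrow> rho x v = 0"
  shows "v \<in> invariants rho"
proof -
  interpret vector_space sc by fact
  interpret Ve: vector_space se by (rule lie_moduleD(1)[OF M])
  have "rho 0 v = 0"
    using lie_moduleD(3)[OF M, of 0 0 v] by simp
  then have "subspace {x. rho x v = 0}"
    by (auto simp: subspace_def lie_moduleD(3,4)[OF M])
  then have "span S \<subseteq> {x. rho x v = 0}"
    using kill by (intro span_minimal) auto
  then show ?thesis
    using span by (auto simp: invariants_def)
qed

text \<open>
  The operator \<open>P = id - (1/a) \<rho>(h)\<close> with \<open>a = \<mu>(h) \<noteq> 0\<close> fixes weight-\<open>0\<close> vectors, kills the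
  weight-\<open>\<mu>\<close> component and rescales the others, while \<open>g\<close> carries it to the analogous operator
  on \<open>E\<^sub>3\<close>, which fixes \<open>w\<close>. So it removes one nonzero weight component of the lift of \<open>w\<close>.
\<close>
lemma zero_weight_preimage_of_weight_sum:
  assumes M2: "lie_module sc br se2 rho2" and M3: "lie_module sc br se3 rho3"
    and hg: "lie_module_hom se2 rho2 se3 rho3 g"
    and "finite K" and "\<And>k. k \<in> K \<Longrightarrow> z k \<in> weight_space se2 rho2 t (mu k)"
    and "u \<in> weight_space se2 rho2 t (\<lambda>_. 0)" and w: "w \<in> weight_space se3 rho3 t (\<lambda>_. 0)"
    and "g (u + sum z K) = w"
  shows "\<exists>v \<in> weight_space se2 rho2 t (\<lambda>_. 0). g v = w"
  using assms(4-)
proof (induction K arbitrary: z u rule: finite_induct)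
  case empty
  then show ?case by auto
next
  case (insert k K)
  interpret V2: vector_space se2 by (rule lie_moduleD(1)[OF M2])
  interpret V3: vector_space se3 by (rule lie_moduleD(1)[OF M3])
  interpret g: Vector_Spaces.linear se2 se3 g by (rule lie_module_homD(1)[OF hg])
  have ws: "V2.subspace (weight_space se2 rho2 t lam)" for lam
    by (rule weight_space_subspace[OF M2])
  have g_sum: "g (u + z k + sum z K) = w"
    using insert by (simp add: add.assoc)
  show ?case
  proof (cases "\<forall>h\<in>t. mu k h = 0")
    case True
    then have "z k \<in> weight_space se2 rho2 t (\<lambda>_. 0)"
      using insert.prems(1) by (auto simp: weight_space_def)
    then have "u + z k \<in> weight_space se2 rho2 t (\<lambda>_. 0)"
      using insert.prems(2) V2.subspace_add[OF ws] by blast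
    then show ?thesis
      using insert.IH[of z "u + z k"] insert.prems(1,3) g_sum by auto
  next
    case False
    then obtain h where h: "h \<in> t" and a: "mu k h \<noteq> 0" by auto
    interpret rho2h: Vector_Spaces.linear se2 se2 "rho2 h" by (rule lie_moduleD(2)[OF M2])
    define P where "P v = v - se2 (1 / mu k h) (rho2 h v)" for v
    have P_weight: "P v = se2 (1 - lam h / mu k h) v" if "v \<in> weight_space se2 rho2 t lam" for v lam
      using that h by (simp add: P_def weight_space_def V2.scale_left_diff_distrib)
    have P_sum: "P (u + z k + sum z K) = P u + P (z k) + (\<Sum>j\<in>K. P (z j))"
      by (simp add: P_def rho2h.add rho2h.sum V2.scale_right_distrib V2.scale_sum_right
          sum_subtractf algebra_simps)
    have "g (P v) = g v - se3 (1 / mu k h) (rho3 h (g v))" for v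
      by (simp add: P_def g.diff g.scale lie_module_homD(2)[OF hg])
    then have "g (P (u + z k + sum z K)) = w"
      using g_sum w h by (simp add: weight_space_def)
    moreover have "P u = u" and "P (z k) = 0"
      using P_weight[OF insert.prems(2)] P_weight[OF insert.prems(1)] a by simp_all
    moreover have "P (z j) \<in> weight_space se2 rho2 t (mu j)" if "j \<in> K" for j
      using P_weight[OF insert.prems(1)] V2.subspace_scale[OF ws] insert.prems(1) that by simp
    ultimately show ?thesis
      using insert.IH[of "P \<circ> z" u] insert.prems(2,3) P_sum by simp
  qed
qed

lemma zero_weight_preimage:
  assumes M2: "lie_module sc br se2 rho2" and M3: "lie_module sc br se3 rho3"
    and hg: "lie_module_hom se2 rho2 se3 rho3 g" and W2: "weight_module se2 rho2 t"
    and w: "w \<in> weight_space se3 rho3 t (\<lambda>_. 0)" and "g v = w"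
  shows "\<exists>v0 \<in> weight_space se2 rho2 t (\<lambda>_. 0). g v0 = w"
proof -
  interpret V2: vector_space se2 by (rule lie_moduleD(1)[OF M2])
  have "v \<in> V2.span (\<Union>lam. weight_space se2 rho2 t lam)"
    using W2 by (simp add: weight_module_def)
  then obtain T r where T: "finite T" "T \<subseteq> (\<Union>lam. weight_space se2 rho2 t lam)"
    and v: "v = (\<Sum>a\<in>T. se2 (r a) a)"
    unfolding V2.span_explicit by blast
  obtain mu where mu: "\<And>a. a \<in> T \<Longrightarrow> a \<in> weight_space se2 rho2 t (mu a)"
    using T(2) by (metis UN_E subsetD)
  have "se2 (r a) a \<in> weight_space se2 rho2 t (mu a)" if "a \<in> T" for a
    using V2.subspace_scale[OF weight_space_subspace[OF M2] mu[OF that]] .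
  moreover have "0 \<in> weight_space se2 rho2 t (\<lambda>_. 0)"
    using V2.subspace_0[OF weight_space_subspace[OF M2]] .
  ultimately show ?thesis
    using zero_weight_preimage_of_weight_sum[OF M2 M3 hg T(1),
        where z = "\<lambda>a. se2 (r a) a" and mu = mu and u = 0]
      w \<open>g v = w\<close> v by simp
qed

lemma inj_on_invariants:
  assumes M2: "lie_module sc br se2 rho2"
    and hf: "lie_module_hom se1 rho1 se2 rho2 f" and hg: "lie_module_hom se2 rho2 se3 rho3 g"
    and "inj f" and exact: "range f = {v. g v = 0}" and E1: "invariants rho1 \<subseteq> {0}"
  shows "inj_on g (invariants rho2)"
proof (rule inj_onI)
  interpret f: Vector_Spaces.linear se1 se2 f by (rule lie_module_homD(1)[OF hf])
  interpret g: Vector_Spaces.linear se2 se3 g by (rule lie_module_homD(1)[OF hg])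
  have rho2_diff: "rho2 x (v - v') = rho2 x v - rho2 x v'" for x v v'
  proof -
    interpret Vector_Spaces.linear se2 se2 "rho2 x" by (rule lie_moduleD(2)[OF M2])
    show ?thesis by (rule diff)
  qed
  fix v v' assume v: "v \<in> invariants rho2" and v': "v' \<in> invariants rho2" and "g v = g v'"
  then have "g (v - v') = 0" by (simp add: g.diff)
  then obtain u where u: "v - v' = f u" using exact by blast
  have "f (rho1 x u) = f 0" for x
    using v v' by (simp add: rho2_diff lie_module_homD(2)[OF hf] u[symmetric] invariants_def)
  then have "u \<in> invariants rho1"
    using \<open>inj f\<close> unfolding invariants_def by (blast dest: injD)
  then show "v = v'"
    using E1 u by auto
qed

lemma invariants_image_subset:
  assumes hg: "lie_module_hom se2 rho2 se3 rho3 g"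
  shows "g ` invariants rho2 \<subseteq> invariants rho3"
proof -
  interpret Vector_Spaces.linear se2 se3 g by (rule lie_module_homD(1)[OF hg])
  show ?thesis
    by (auto simp: invariants_def lie_module_homD(2)[OF hg, symmetric])
qed

lemma invariants_subset_image:
  assumes lie: "lie_algebra sc br" and bI: "borel_type sc br t R"
    and M2: "lie_module sc br se2 rho2" and W2: "weight_module se2 rho2 t"
    and M3: "lie_module sc br se3 rho3"
    and hf: "lie_module_hom se1 rho1 se2 rho2 f" and hg: "lie_module_hom se2 rho2 se3 rho3 g"
    and "inj f" and exact: "range f = {v. g v = 0}" and "surj g"
    and no_root_weight: "\<And>alpha u. alpha \<in> R \<Longrightarrow> u \<in> weight_space se1 rho1 t alpha \<Longrightarrow> u = 0"
  shows "invariants rho3 \<subseteq> g ` invariants rho2"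
proof
  interpret f: Vector_Spaces.linear se1 se2 f by (rule lie_module_homD(1)[OF hf])
  interpret V2: vector_space se2 by (rule lie_moduleD(1)[OF M2])
  fix w assume w: "w \<in> invariants rho3"
  then have "w \<in> weight_space se3 rho3 t (\<lambda>_. 0)"
    using invariants_subset_zero_weight_space[OF lie_moduleD(1)[OF M3]] by blast
  then obtain v where v: "v \<in> weight_space se2 rho2 t (\<lambda>_. 0)" and gv: "g v = w"
    using zero_weight_preimage[OF M2 M3 hg W2] \<open>surj g\<close> by (metis surjD)
  have "rho2 x v = 0" if "alpha \<in> R" and x: "x \<in> root_space sc br t alpha" for x alpha
  proof -
    have "g (rho2 x v) = 0"
      using w gv by (simp add: lie_module_homD(2)[OF hg] invariants_def)
    then obtain u where u: "rho2 x v = f u" using exact by blast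
    have "f u \<in> weight_space se2 rho2 t alpha"
      using root_space_action_weight_space[OF M2 x v] u by simp
    then have "u = 0"
      using weight_space_preimage[OF hf \<open>inj f\<close>] no_root_weight[OF \<open>alpha \<in> R\<close>] by blast
    then show ?thesis using u by simp
  qed
  moreover have "rho2 h v = 0" if "h \<in> t" for h
    using v that by (simp add: weight_space_def)
  moreover have "vector_space sc"
    using lie by (simp add: lie_algebra_def)
  moreover have "module.span sc (t \<union> (\<Union>alpha\<in>R. root_space sc br t alpha)) = UNIV"
    using bI by (simp add: borel_type_def)
  ultimately have "v \<in> invariants rho2"
    by (intro invariant_if_annihilated_by_spanning_set[OF _ M2]) auto
  then show "w \<in> g ` invariants rho2"
    using gv by blast
qed

theorem lemma2p3p2:
  fixes sc :: "complex \<Rightarrow> 'b::ab_group_add \<Rightarrow> 'b" and br :: "'b \<Rightarrow> 'b \<Rightarrow> 'b"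
    and t :: "'b set" and R :: "('b \<Rightarrow> complex) set"
    and se1 :: "complex \<Rightarrow> 'e1::ab_group_add \<Rightarrow> 'e1" and rho1 :: "'b \<Rightarrow> 'e1 \<Rightarrow> 'e1"
    and se2 :: "complex \<Rightarrow> 'e2::ab_group_add \<Rightarrow> 'e2" and rho2 :: "'b \<Rightarrow> 'e2 \<Rightarrow> 'e2"
    and se3 :: "complex \<Rightarrow> 'e3::ab_group_add \<Rightarrow> 'e3" and rho3 :: "'b \<Rightarrow> 'e3 \<Rightarrow> 'e3"
    and f :: "'e1 \<Rightarrow> 'e2" and g :: "'e2 \<Rightarrow> 'e3"
  assumes lie: "lie_algebra sc br"
    and bI: "borel_type sc br t R"
    and M1: "lie_module sc br se1 rho1" and W1: "weight_module se1 rho1 t"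
    and M2: "lie_module sc br se2 rho2" and W2: "weight_module se2 rho2 t"
    and M3: "lie_module sc br se3 rho3" and W3: "weight_module se3 rho3 t"
    and hf: "lie_module_hom se1 rho1 se2 rho2 f"
    and hg: "lie_module_hom se2 rho2 se3 rho3 g"
    and f_inj: "inj f"
    and exact: "range f = {v. g v = 0}"
    and g_surj: "surj g"
    and no_weight: "\<And>lam. is_weight se1 rho1 t lam \<Longrightarrow>
                      \<not> (\<exists>alpha\<in>insert (\<lambda>_. 0) R. eq_on t lam alpha)"
  shows "bij_betw g (invariants rho2) (invariants rho3)"
proof -
  have trivial: "u = 0" if "alpha \<in> insert (\<lambda>_. 0) R" and "u \<in> weight_space se1 rho1 t alpha"
    for alpha u
    using no_weight[of alpha] that by (auto simp: is_weight_def eq_on_def)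
  then have "invariants rho1 \<subseteq> {0}"
    using invariants_subset_zero_weight_space[OF lie_moduleD(1)[OF M1]] by blast
  then have "inj_on g (invariants rho2)"
    by (rule inj_on_invariants[OF M2 hf hg f_inj exact])
  moreover have "g ` invariants rho2 = invariants rho3"
    using invariants_image_subset[OF hg]
      invariants_subset_image[OF lie bI M2 W2 M3 hf hg f_inj exact g_surj] trivial by blast
  ultimately show ?thesis
    by (simp add: bij_betw_def)
qed

end
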